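(* Let $\mathbb{R}^n$ be endowed with the Euclidean norm $\|\cdot\|_2$, let $A\in\mathbb{R}^{m\times n}$ have at least two different columns, and let $f:\mathbb{R}^m\to\mathbb{R}\cup\{\infty\}$ be a differentiable convex function with $\mathrm{conv}(A)\subseteq\mathrm{dom}(f)$ and $\frac{L_{f,A}}{\mu^\star_{f,A}}<\infty$. Let $x_0\in\Delta_{n-1}$ and for $k=0,1,\dots$ let \[ x_{k+1}=\operatorname*{argmin}_{x\in\Delta_{n-1}}\left\{f(Ax_k)+\langle\nabla f(Ax_k),A(x-x_k)\rangle+\frac{L_{f,A}}{2}\|x-x_k\|_2^2\right\}. \] Then for all $k\ge0$ \[ f(Ax_k)-f^\star\le\left(1-\min\left\{\frac{\mu^\star_{f,A}}{4L_{f,A}},\frac12\right\}\right)^k(f(Ax_0)-f^\star). \]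
   Context: $\Delta_{n-1}=\{x\in\mathbb{R}^n_+:\sum_ix_i=1\}$, $\mathrm{conv}(A)=\{Ax:x\in\Delta_{n-1}\}$. For $u\in\mathrm{conv}(A)$, $Z(u)=\{z\in\Delta_{n-1}:Az=u\}$, $\mathrm{dist}(x,Z(u))=\min_{z\in Z(u)}\|x-z\|_2$, and $L_{f,A}=\sup_{u\in\mathrm{conv}(A),\,x\in\Delta_{n-1}\setminus Z(u)}\frac{2(f(Ax)-f(u)-\langle\nabla f(u),Ax-u\rangle)}{\mathrm{dist}(x,Z(u))^2}$. $f^\star=\min_{x\in\Delta_{n-1}}f(Ax)$, $Z^\star=\{z\in\Delta_{n-1}:f(Az)=f^\star\}$, and $\mu^\star_{f,A}=\inf_{x\in\Delta_{n-1}\setminus Z^\star}\frac{2(f(Ax)-f^\star)}{\mathrm{dist}(x,Z^\star)^2}$ with $\mathrm{dist}(x,Z^\star)=\min_{z\in Z^\star}\|x-z\|_2$. *)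

theory Defs
  imports "HOL-Analysis.Analysis"
begin

definition unit_simplex :: "(real^'n) set" where
  "unit_simplex = {x. (\<forall>i. 0 \<le> x $ i) \<and> (\<Sum>i\<in>UNIV. x $ i) = 1}"

definition convA :: "real^'n^'m \<Rightarrow> (real^'m) set" where
  "convA A = (\<lambda>x. A *v x) ` unit_simplex"

definition Zset :: "real^'n^'m \<Rightarrow> real^'m \<Rightarrow> (real^'n) set" where
  "Zset A u = {z \<in> unit_simplex. A *v z = u}"

definition grad :: "(real^'m \<Rightarrow> real) \<Rightarrow> real^'m \<Rightarrow> real^'m" where
  "grad f u = (SOME g. (f has_derivative (\<lambda>h. g \<bullet> h)) (at u))"

definition LfA :: "(real^'m \<Rightarrow> real) \<Rightarrow> real^'n^'m \<Rightarrow> ereal" where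
  "LfA f A = (SUP p \<in> {(u, x). u \<in> convA A \<and> x \<in> unit_simplex - Zset A u}.
      ereal (2 * (f (A *v snd p) - f (fst p) - grad f (fst p) \<bullet> (A *v snd p - fst p))
             / (infdist (snd p) (Zset A (fst p)))\<^sup>2))"

definition fstar :: "(real^'m \<Rightarrow> real) \<Rightarrow> real^'n^'m \<Rightarrow> real" where
  "fstar f A = (INF x \<in> unit_simplex. f (A *v x))"

definition Zstar :: "(real^'m \<Rightarrow> real) \<Rightarrow> real^'n^'m \<Rightarrow> (real^'n) set" where
  "Zstar f A = {z \<in> unit_simplex. f (A *v z) = fstar f A}"

definition mustar :: "(real^'m \<Rightarrow> real) \<Rightarrow> real^'n^'m \<Rightarrow> ereal" where
  "mustar f A = (INF x \<in> unit_simplex - Zstar f A.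
      ereal (2 * (f (A *v x) - fstar f A) / (infdist x (Zstar f A))\<^sup>2))"

end

theory Submission
  imports Defs
begin

text \<open>Because \<open>x\<^sub>k \<in> Zset A (A x\<^sub>k)\<close>, the definition of \<open>LfA\<close> makes the quadratic model of the
  step a majorant of \<open>f \<circ> A\<close> on the simplex, so \<open>f (A x\<^sub>k\<^sub>+\<^sub>1)\<close> is at most the model's value at
  every point of the simplex. On the segment from \<open>x\<^sub>k\<close> towards a nearest point \<open>z\<close> of \<open>Zstar\<close>,
  convexity bounds the linear term by \<open>-t (f (A x\<^sub>k) - f\<^sup>*)\<close> and the definition of \<open>mustar\<close> bounds
  \<open>\<parallel>z - x\<^sub>k\<parallel>\<^sup>2\<close> by \<open>2 (f (A x\<^sub>k) - f\<^sup>*) / \<mu>\<close>; the best \<open>t \<in> [0, 1]\<close> gives the contraction factor.\<close>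

lemma has_derivative_grad:
  fixes f :: "real^'m \<Rightarrow> real"
  assumes "f differentiable (at u)"
  shows "(f has_derivative (\<lambda>h. grad f u \<bullet> h)) (at u)"
proof -
  obtain f' where f': "(f has_derivative f') (at u)"
    using assms differentiable_def by blast
  have "f' = (\<lambda>h. adjoint f' 1 \<bullet> h)"
    using adjoint_works[OF has_derivative_linear[OF f'], of _ 1] by (simp add: fun_eq_iff inner_commute)
  with f' have "\<exists>g. (f has_derivative (\<lambda>h. g \<bullet> h)) (at u)" by metis
  then show ?thesis unfolding grad_def by (rule someI_ex)
qed

lemma convex_on_has_derivative_ge:
  fixes f :: "'a::real_normed_vector \<Rightarrow> real"
  assumes f: "convex_on D f" and uv: "u \<in> D" "v \<in> D"
    and f': "(f has_derivative f') (at u)"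
  shows "f' (v - u) \<le> f v - f u"
proof -
  define \<phi> where "\<phi> t = f (u + t *\<^sub>R (v - u))" for t
  have "((f \<circ> (\<lambda>t. u + t *\<^sub>R (v - u))) has_derivative (f' \<circ> (\<lambda>t. t *\<^sub>R (v - u)))) (at 0)"
    by (rule diff_chain_at) (use f' in \<open>auto intro!: derivative_eq_intros\<close>)
  moreover have "f' (t *\<^sub>R (v - u)) = t * f' (v - u)" for t
    using linear_scale[OF has_derivative_linear[OF f']] by simp
  ultimately have "(\<phi> has_field_derivative f' (v - u)) (at 0)"
    unfolding has_field_derivative_def \<phi>_def by (simp add: o_def mult.commute[of _ "f' (v - u)"])
  then have lim: "((\<lambda>t. (\<phi> t - \<phi> 0) / (t - 0)) \<longlongrightarrow> f' (v - u)) (at_right 0)"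
    unfolding has_field_derivative_iff by (rule tendsto_mono[rotated]) (simp add: at_le)
  have "\<forall>\<^sub>F t in at_right 0. (\<phi> t - \<phi> 0) / (t - 0) \<le> f v - f u"
    unfolding eventually_at_right_field
  proof (intro exI[of _ 1] conjI allI impI)
    fix t :: real
    assume t: "0 < t" "t < 1"
    have "\<phi> t = f ((1 - t) *\<^sub>R u + t *\<^sub>R v)"
      unfolding \<phi>_def by (simp add: algebra_simps)
    also have "\<dots> \<le> (1 - t) * f u + t * f v"
      using convex_onD[OF f, of t u v] t uv by simp
    finally have "\<phi> t - \<phi> 0 \<le> t * (f v - f u)"
      by (simp add: \<phi>_def algebra_simps)
    then show "(\<phi> t - \<phi> 0) / (t - 0) \<le> f v - f u"
      using t by (simp add: divide_le_eq mult.commute)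
  qed simp
  then show ?thesis by (rule tendsto_upperbound[OF lim]) simp
qed

lemma convex_unit_simplex: "convex unit_simplex"
  unfolding convex_def unit_simplex_def
  by (auto simp: sum.distrib simp flip: sum_distrib_left)

lemma compact_unit_simplex: "compact unit_simplex"
proof -
  have "unit_simplex = (\<Inter>i. {x. 0 \<le> x $ i}) \<inter> {x. (\<Sum>i\<in>UNIV. x $ i) = 1}"
    unfolding unit_simplex_def by auto
  moreover have "closed \<dots>"
    by (intro closed_Int closed_INT ballI closed_Collect_le closed_Collect_eq continuous_intros)
  moreover have "norm x \<le> 1" if "x \<in> unit_simplex" for x :: "real^'n"
    using norm_le_l1_cart[of x] that unfolding unit_simplex_def by simp
  ultimately show ?thesis
    unfolding compact_eq_bounded_closed bounded_iff by metis
qed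

lemma axis_in_unit_simplex: "axis i 1 \<in> unit_simplex"
  unfolding unit_simplex_def axis_def by auto

lemma closed_Zset: "closed (Zset A u)"
  unfolding Zset_def
  by (intro continuous_closed_preimage_constant linear_continuous_on
      compact_imp_closed compact_unit_simplex) auto

lemma fstar_le:
  assumes "continuous_on unit_simplex (\<lambda>x. f (A *v x))" and "y \<in> unit_simplex"
  shows "fstar f A \<le> f (A *v y)"
proof -
  have "bdd_below ((\<lambda>x. f (A *v x)) ` unit_simplex)"
    by (intro bounded_imp_bdd_below compact_imp_bounded compact_continuous_image
        assms(1) compact_unit_simplex)
  then show ?thesis
    unfolding fstar_def using assms(2) by (rule cINF_lower)
qed

lemma Zstar_nonempty:
  assumes "continuous_on unit_simplex (\<lambda>x. f (A *v x))"
  shows "Zstar f A \<noteq> {}"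
proof -
  obtain z where z: "z \<in> unit_simplex" "\<And>y. y \<in> unit_simplex \<Longrightarrow> f (A *v z) \<le> f (A *v y)"
    using continuous_attains_inf[OF compact_unit_simplex _ assms] axis_in_unit_simplex by blast
  then have "fstar f A = f (A *v z)"
    unfolding fstar_def by (intro antisym cINF_lower cINF_greatest) (auto simp: bdd_below_def)
  with z show ?thesis
    unfolding Zstar_def by auto
qed

lemma closed_Zstar:
  assumes "continuous_on unit_simplex (\<lambda>x. f (A *v x))"
  shows "closed (Zstar f A)"
  unfolding Zstar_def
  by (rule continuous_closed_preimage_constant[OF assms compact_imp_closed[OF compact_unit_simplex]])

lemma LfA_nonneg:
  assumes "\<exists>i j. column i A \<noteq> column j A"
    and tangent: "\<And>u v. u \<in> convA A \<Longrightarrow> v \<in> convA A \<Longrightarrow> grad f u \<bullet> (v - u) \<le> f v - f u"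
  shows "0 \<le> LfA f A"
proof -
  obtain i j where ij: "column i A \<noteq> column j A"
    using assms(1) by blast
  define u where "u = A *v axis i 1"
  define v where "v = A *v axis j 1"
  have uv: "u \<in> convA A" "v \<in> convA A"
    unfolding u_def v_def convA_def using axis_in_unit_simplex by auto
  have "axis j 1 \<notin> Zset A u"
    using ij unfolding Zset_def u_def by (simp add: matrix_vector_mult_basis)
  then have "ereal (2 * (f v - f u - grad f u \<bullet> (v - u)) / (infdist (axis j 1) (Zset A u))\<^sup>2)
      \<le> LfA f A"
    unfolding LfA_def v_def using uv(1) axis_in_unit_simplex by (intro SUP_upper2) auto
  moreover have "0 \<le> 2 * (f v - f u - grad f u \<bullet> (v - u)) / (infdist (axis j 1) (Zset A u))\<^sup>2"
    using tangent[OF uv] by simp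
  ultimately show ?thesis
    by (meson ereal_less_eq(5) order_trans zero_ereal_def)
qed

lemma LfA_upper_bound:
  assumes L: "LfA f A = ereal L" "0 \<le> L" and x: "x \<in> unit_simplex" and y: "y \<in> unit_simplex"
  shows "f (A *v y) \<le> f (A *v x) + grad f (A *v x) \<bullet> (A *v (y - x)) + L / 2 * (norm (y - x))\<^sup>2"
proof (cases "A *v y = A *v x")
  case True
  then show ?thesis
    using L(2) by (simp add: matrix_vector_mult_diff_distrib)
next
  case False
  define u where "u = A *v x"
  define d where "d = infdist y (Zset A u)"
  have xZ: "x \<in> Zset A u"
    using x unfolding Zset_def u_def by auto
  have "y \<notin> Zset A u"
    using False unfolding Zset_def u_def by auto
  then have "ereal (2 * (f (A *v y) - f u - grad f u \<bullet> (A *v y - u)) / d\<^sup>2) \<le> LfA f A"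
    unfolding LfA_def d_def using x y \<open>y \<notin> Zset A u\<close>
    by (intro SUP_upper2[of "(u, y)"]) (auto simp: u_def convA_def)
  then have quot: "2 * (f (A *v y) - f u - grad f u \<bullet> (A *v y - u)) / d\<^sup>2 \<le> L"
    using L(1) by simp
  have "d > 0"
    unfolding d_def using infdist_pos_not_in_closed[OF closed_Zset _ \<open>y \<notin> Zset A u\<close>] xZ by blast
  then have "f (A *v y) - f u - grad f u \<bullet> (A *v y - u) \<le> L / 2 * d\<^sup>2"
    using quot by (simp add: divide_le_eq field_simps)
  also have "\<dots> \<le> L / 2 * (norm (y - x))\<^sup>2"
    using L(2) infdist_le[OF xZ, of y] \<open>d > 0\<close> unfolding d_def
    by (intro mult_left_mono power_mono) (auto simp: dist_norm)
  finally show ?thesis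
    unfolding u_def by (simp add: matrix_vector_mult_diff_distrib)
qed

lemma mustar_quadratic_growth:
  assumes "mustar f A = ereal \<mu>" "x \<in> unit_simplex" "fstar f A \<le> f (A *v x)"
  shows "\<mu> / 2 * (infdist x (Zstar f A))\<^sup>2 \<le> f (A *v x) - fstar f A"
proof (cases "x \<in> Zstar f A \<or> infdist x (Zstar f A) = 0")
  case True
  then show ?thesis
    using assms(3) by auto
next
  case False
  then have "mustar f A \<le> ereal (2 * (f (A *v x) - fstar f A) / (infdist x (Zstar f A))\<^sup>2)"
    unfolding mustar_def using assms(2) by (intro INF_lower) auto
  then show ?thesis
    using assms(1) False by (simp add: field_simps)
qed

lemma mustar_infinite_imp_in_Zstar:
  assumes "mustar f A = \<infinity>" "x \<in> unit_simplex"
  shows "x \<in> Zstar f A"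
proof (rule ccontr)
  assume "x \<notin> Zstar f A"
  then have "mustar f A \<le> ereal (2 * (f (A *v x) - fstar f A) / (infdist x (Zstar f A))\<^sup>2)"
    unfolding mustar_def using assms(2) by (intro INF_lower) auto
  with assms(1) show False by simp
qed

text \<open>In the theorem the rate is computed in \<open>ereal\<close>, where \<open>\<mu> / 0 = \<infinity>\<close>; hence the case \<open>L = 0\<close>.\<close>

definition linear_rate :: "real \<Rightarrow> real \<Rightarrow> real" where
  "linear_rate \<mu> L = (if L = 0 then 1/2 else 1 - min (\<mu> / (4 * L)) (1/2))"

lemma linear_rate_nonneg: "0 \<le> linear_rate \<mu> L"
  unfolding linear_rate_def by auto

lemma ereal_linear_rate:
  assumes "0 < \<mu>" "0 \<le> L"
  shows "1 - min (ereal \<mu> / (4 * ereal L)) (1/2) = ereal (linear_rate \<mu> L)"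
proof -
  have half: "(1/2 :: ereal) = ereal (1/2)" "1 - 1 / ereal 2 = ereal (1/2)"
    by (simp_all add: one_ereal_def)
  show ?thesis
  proof (cases "L = 0")
    case True
    then have "ereal \<mu> / (4 * ereal L) = \<infinity>"
      using assms(1) by (simp add: divide_ereal_def)
    with True show ?thesis
      unfolding linear_rate_def by (simp add: half)
  next
    case False
    then have "ereal \<mu> / (4 * ereal L) = ereal (\<mu> / (4 * L))"
      by simp
    with False show ?thesis
      unfolding linear_rate_def half(1) by (simp add: min_def one_ereal_def)
  qed
qed

lemma linear_rate_bound:
  assumes "0 \<le> e" "0 < \<mu>" "0 \<le> L"
    and segment: "\<And>t. 0 \<le> t \<Longrightarrow> t \<le> 1 \<Longrightarrow> e' \<le> (1 - t) * e + L * t\<^sup>2 * e / \<mu>"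
  shows "e' \<le> linear_rate \<mu> L * e"
proof (cases "L = 0 \<or> 1/2 < \<mu> / (4 * L)")
  case True
  have "L / \<mu> \<le> 1/2"
    using True assms(2,3) by (cases "L = 0") (auto simp: field_simps)
  then have "L / \<mu> * e \<le> 1/2 * e"
    using assms(1) by (rule mult_right_mono)
  moreover have "e' \<le> L / \<mu> * e"
    using segment[of 1] by simp
  ultimately have "e' \<le> 1/2 * e"
    by linarith
  with True show ?thesis
    unfolding linear_rate_def by auto
next
  case False
  define t where "t = \<mu> / (2 * L)"
  have "L > 0" "t \<le> 1"
    using False assms(3) unfolding t_def by (auto simp: field_simps)
  moreover have "(1 - t) * e + L * t\<^sup>2 * e / \<mu> = (1 - \<mu> / (4 * L)) * e"
    unfolding t_def using \<open>L > 0\<close> assms(2) by (simp add: field_simps power2_eq_square)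
  ultimately show ?thesis
    using segment[of t] False assms(2) unfolding linear_rate_def t_def by auto
qed

lemma segment_descent_contraction:
  fixes F :: "'a::real_normed_vector \<Rightarrow> real"
  assumes "convex S" "x \<in> S" "z \<in> S" "0 < \<mu>" "0 \<le> L" "linear l"
    and descent: "\<And>y. y \<in> S \<Longrightarrow> F x' \<le> F x + l (y - x) + L / 2 * (norm (y - x))\<^sup>2"
    and tangent: "l (z - x) \<le> F z - F x"
    and growth: "\<mu> / 2 * (norm (z - x))\<^sup>2 \<le> F x - F z"
  shows "F x' - F z \<le> linear_rate \<mu> L * (F x - F z)"
proof (rule linear_rate_bound[OF _ \<open>0 < \<mu>\<close> \<open>0 \<le> L\<close>])
  show "0 \<le> F x - F z"
    using growth \<open>0 < \<mu>\<close> by (smt (verit) zero_le_power2 divide_nonneg_pos mult_nonneg_nonneg)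
  fix t :: real
  assume t: "0 \<le> t" "t \<le> 1"
  have "x + t *\<^sub>R (z - x) = (1 - t) *\<^sub>R x + t *\<^sub>R z"
    by (simp add: algebra_simps)
  then have "x + t *\<^sub>R (z - x) \<in> S"
    using convexD[OF \<open>convex S\<close> \<open>x \<in> S\<close> \<open>z \<in> S\<close>, of "1 - t" t] t by simp
  from descent[OF this] have "F x' \<le> F x + t * l (z - x) + L / 2 * (t\<^sup>2 * (norm (z - x))\<^sup>2)"
    using t linear_scale[OF \<open>linear l\<close>] by (simp add: power_mult_distrib)
  also have "\<dots> \<le> F x + t * (F z - F x) + L / 2 * (t\<^sup>2 * (2 * (F x - F z) / \<mu>))"
    using t tangent growth \<open>0 < \<mu>\<close> \<open>0 \<le> L\<close>
    by (intro add_mono mult_left_mono) (auto simp: field_simps)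
  finally show "F x' - F z \<le> (1 - t) * (F x - F z) + L * t\<^sup>2 * (F x - F z) / \<mu>"
    using \<open>0 < \<mu>\<close> by (simp add: field_simps)
qed

lemma proximal_step_contraction:
  assumes L: "LfA f A = ereal L" "0 \<le> L" and \<mu>: "mustar f A = ereal \<mu>" "0 < \<mu>"
    and cont: "continuous_on unit_simplex (\<lambda>y. f (A *v y))"
    and tangent: "\<And>u v. u \<in> convA A \<Longrightarrow> v \<in> convA A \<Longrightarrow> grad f u \<bullet> (v - u) \<le> f v - f u"
    and x: "x \<in> unit_simplex" and x': "x' \<in> unit_simplex"
    and prox: "\<forall>y\<in>unit_simplex.
          f (A *v x) + grad f (A *v x) \<bullet> (A *v (x' - x)) + L / 2 * (norm (x' - x))\<^sup>2
          \<le> f (A *v x) + grad f (A *v x) \<bullet> (A *v (y - x)) + L / 2 * (norm (y - x))\<^sup>2"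
  shows "f (A *v x') - fstar f A \<le> linear_rate \<mu> L * (f (A *v x) - fstar f A)"
proof -
  obtain z where z: "z \<in> Zstar f A" and dz: "infdist x (Zstar f A) = dist x z"
    using infdist_attains_inf[OF closed_Zstar[OF cont] Zstar_nonempty[OF cont]] by blast
  then have zS: "z \<in> unit_simplex" and fz: "f (A *v z) = fstar f A"
    unfolding Zstar_def by auto
  have "f (A *v x') - f (A *v z) \<le> linear_rate \<mu> L * (f (A *v x) - f (A *v z))"
  proof (rule segment_descent_contraction[OF convex_unit_simplex x zS \<mu>(2) L(2)])
    show "linear (\<lambda>v. grad f (A *v x) \<bullet> (A *v v))"
      by (intro linearI) (simp_all add: matrix_vector_right_distrib matrix_vector_mult_scaleR inner_add_right)
    show "f (A *v x') \<le> f (A *v x) + grad f (A *v x) \<bullet> (A *v (y - x)) + L / 2 * (norm (y - x))\<^sup>2"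
      if "y \<in> unit_simplex" for y
      using LfA_upper_bound[OF L x x'] prox that by fastforce
    show "grad f (A *v x) \<bullet> (A *v (z - x)) \<le> f (A *v z) - f (A *v x)"
      using tangent x zS unfolding convA_def by (simp add: matrix_vector_mult_diff_distrib)
    show "\<mu> / 2 * (norm (z - x))\<^sup>2 \<le> f (A *v x) - f (A *v z)"
      using mustar_quadratic_growth[OF \<mu>(1) x fstar_le[OF cont x]] dz fz
      by (simp add: dist_norm norm_minus_commute)
  qed
  with fz show ?thesis by simp
qed

lemma le_power_mult_of_contraction:
  fixes e :: "nat \<Rightarrow> 'a::linordered_semiring_1"
  assumes "\<And>k. e (Suc k) \<le> r * e k" and "0 \<le> r"
  shows "e k \<le> r ^ k * e 0"
proof (induction k)
  case (Suc k)
  have "e (Suc k) \<le> r * e k"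
    by (fact assms(1))
  also have "\<dots> \<le> r * (r ^ k * e 0)"
    using Suc assms(2) by (rule mult_left_mono)
  finally show ?case
    by (simp add: mult.assoc)
qed simp

theorem proposition4:
  fixes A :: "real^'n^'m" and f :: "real^'m \<Rightarrow> real" and D :: "(real^'m) set"
    and x :: "nat \<Rightarrow> real^'n"
  assumes two_cols: "\<exists>i j. column i A \<noteq> column j A"
    and domD: "open D" "convex D"
    and cvx: "convex_on D f"
    and diff: "\<forall>u\<in>D. f differentiable (at u)"
    and dom: "convA A \<subseteq> D"
    and L_fin: "LfA f A < \<infinity>"
    and mu_pos: "mustar f A > 0"
    and x0: "x 0 \<in> unit_simplex"
    and step: "\<forall>k. x (Suc k) \<in> unit_simplex \<and>
       (\<forall>y\<in>unit_simplex.
          f (A *v x k) + grad f (A *v x k) \<bullet> (A *v (x (Suc k) - x k))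
            + real_of_ereal (LfA f A) / 2 * (norm (x (Suc k) - x k))\<^sup>2
          \<le> f (A *v x k) + grad f (A *v x k) \<bullet> (A *v (y - x k))
            + real_of_ereal (LfA f A) / 2 * (norm (y - x k))\<^sup>2)"
  shows "\<forall>k. ereal (f (A *v x k) - fstar f A)
           \<le> (1 - min (mustar f A / (4 * LfA f A)) (1/2)) ^ k * ereal (f (A *v x 0) - fstar f A)"
proof -
  have xS: "x k \<in> unit_simplex" for k
    using x0 step by (cases k) auto
  have tangent: "grad f u \<bullet> (v - u) \<le> f v - f u" if "u \<in> convA A" "v \<in> convA A" for u v
    using convex_on_has_derivative_ge[OF cvx _ _ has_derivative_grad] diff dom that by blast
  have "continuous_on D f"
    using diff by (meson continuous_at_imp_continuous_on differentiable_imp_continuous_within)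
  then have cont: "continuous_on unit_simplex (\<lambda>y. f (A *v y))"
    by (rule continuous_on_compose2[OF _ matrix_vector_mult_linear_continuous_on])
      (use dom in \<open>auto simp: convA_def\<close>)
  obtain L where L: "LfA f A = ereal L" "0 \<le> L"
    using LfA_nonneg[OF two_cols tangent] L_fin by (cases "LfA f A") auto
  show ?thesis
  proof (cases "mustar f A")
    case PInf
    then have "f (A *v x k) = fstar f A" for k
      using mustar_infinite_imp_in_Zstar[OF _ xS] unfolding Zstar_def by blast
    then show ?thesis
      by (simp add: zero_ereal_def[symmetric])
  next
    case MInf
    with mu_pos show ?thesis by simp
  next
    case (real \<mu>)
    with mu_pos have \<mu>: "mustar f A = ereal \<mu>" "0 < \<mu>" by auto
    define r where "r = linear_rate \<mu> L"
    define e where "e k = f (A *v x k) - fstar f A" for k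
    have "e (Suc k) \<le> r * e k" for k
      using proximal_step_contraction[OF L \<mu> cont tangent xS[of k] xS[of "Suc k"]] step L(1)
      unfolding r_def e_def by simp
    then have "e k \<le> r ^ k * e 0" for k
      using linear_rate_nonneg unfolding r_def by (rule le_power_mult_of_contraction)
    then have "ereal (e k) \<le> ereal r ^ k * ereal (e 0)" for k
      by simp
    then show ?thesis
      unfolding \<mu>(1) L(1) ereal_linear_rate[OF \<mu>(2) L(2)] r_def e_def by blast
  qed
qed

end
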